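(* Let $\rho\in[0,1]$, let $U_0,U_1$ be random vectors in $\mathbb{R}^d$, let $\Pi\in\mathbb{R}^{d\times d}$ be positive semidefinite (i.e. $v^T\Pi v\ge0$ for all $v\in\mathbb{R}^d$), and let $\Phi:\mathbb{R}\to\mathbb{R}$ be convex and non-increasing. Assume the expectations below are finite for all $\theta$. Then the performative risk $$\mathrm{PR}(\theta)=\rho\,\mathbb{E}\big[\Phi(U_1^T\theta)\big]+(1-\rho)\,\mathbb{E}\big[\Phi\big(-(U_0+\Pi\theta)^T\theta\big)\big]$$ is a convex function of $\theta\in\mathbb{R}^d$.
   Context: This is the performative risk of a linear classifier $f_\theta(x)=x^T\theta$ with convex surrogate loss $\Phi$ in binary classification where $\mathbb{P}_\theta(Y=1)=\rho$ is fixed, class-1 covariates are distributed as $U_1$ (unaffected by the deployed model), and class-0 covariates are distributed as $U_0+\Pi\theta$ (a linear performative shift). Examples of admissible $\Phi$ include the hinge, logistic and exponential losses. *)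

theory Defs
  imports "HOL-Probability.Probability"
begin

definition perf_risk ::
  "'w measure \<Rightarrow> real \<Rightarrow> ('w \<Rightarrow> real^'d) \<Rightarrow> ('w \<Rightarrow> real^'d) \<Rightarrow> real^'d^'d
     \<Rightarrow> (real \<Rightarrow> real) \<Rightarrow> real^'d \<Rightarrow> real" where
  "perf_risk M \<rho> U0 U1 Pi_mat \<Phi> \<theta> =
     \<rho> * (\<integral>\<omega>. \<Phi> (U1 \<omega> \<bullet> \<theta>) \<partial>M)
     + (1 - \<rho>) * (\<integral>\<omega>. \<Phi> (- ((U0 \<omega> + Pi_mat *v \<theta>) \<bullet> \<theta>)) \<partial>M)"

end

theory Submission
  imports Defs
begin

text \<open>Both integrands are a convex non-increasing \<open>\<Phi>\<close> applied to a concave function of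
  \<open>\<theta>\<close>: the linear map \<open>\<theta> \<mapsto> U\<^sub>1\<^sup>T\<theta>\<close>, and \<open>\<theta> \<mapsto> -U\<^sub>0\<^sup>T\<theta> - \<theta>\<^sup>T\<Pi>\<theta>\<close>, which is concave
  because \<open>\<Pi>\<close> is positive semidefinite. Such compositions are convex, and convexity
  survives integration over \<open>\<omega>\<close> and nonnegative combinations.\<close>

lemma convex_on_antimono_comp_concave:
  fixes f :: "real \<Rightarrow> real"
  assumes f: "convex_on T f" "antimono_on T f"
    and g: "concave_on S g" "g ` S \<subseteq> T"
  shows "convex_on S (\<lambda>x. f (g x))"
proof (rule convex_onI)
  show "convex S" using g(1) by (rule concave_on_imp_convex)
  fix t :: real and x y
  assume t: "0 < t" "t < 1" and xy: "x \<in> S" "y \<in> S"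
  let ?z = "(1 - t) *\<^sub>R x + t *\<^sub>R y"
  have gxy: "g x \<in> T" "g y \<in> T" using g(2) xy by auto
  have "?z \<in> S" using \<open>convex S\<close> xy t by (simp add: convex_alt)
  then have "g ?z \<in> T" using g(2) by auto
  moreover have "(1 - t) *\<^sub>R g x + t *\<^sub>R g y \<in> T"
    using convex_on_imp_convex[OF f(1)] gxy t by (simp add: convex_alt)
  moreover have "(1 - t) *\<^sub>R g x + t *\<^sub>R g y \<le> g ?z"
    using concave_onD[OF g(1)] t xy by simp
  ultimately have "f (g ?z) \<le> f ((1 - t) *\<^sub>R g x + t *\<^sub>R g y)"
    using f(2) by (simp add: monotone_on_def)
  also have "\<dots> \<le> (1 - t) * f (g x) + t * f (g y)"
    using convex_onD[OF f(1)] t gxy by simp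
  finally show "f (g ?z) \<le> (1 - t) * f (g x) + t * f (g y)" .
qed

lemma concave_on_inner_right: "concave_on S (\<lambda>x. a \<bullet> x) \<longleftrightarrow> convex S"
  by (auto simp: concave_on_iff inner_add_right)

lemma quadratic_form_convex_comb:
  fixes P :: "real^'n^'n" and x y :: "real^'n" and t :: real
  shows "(1 - t) * (x \<bullet> (P *v x)) + t * (y \<bullet> (P *v y))
     - ((1 - t) *\<^sub>R x + t *\<^sub>R y) \<bullet> (P *v ((1 - t) *\<^sub>R x + t *\<^sub>R y))
     = t * (1 - t) * ((x - y) \<bullet> (P *v (x - y)))"
  by (simp add: matrix_vector_right_distrib matrix_vector_mult_diff_distrib
      matrix_vector_mult_scaleR inner_add_left inner_add_right inner_diff_left inner_diff_right
      algebra_simps)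

lemma convex_on_quadratic_form:
  fixes P :: "real^'n^'n"
  assumes psd: "\<And>v. v \<bullet> (P *v v) \<ge> 0"
  shows "convex_on UNIV (\<lambda>v. v \<bullet> (P *v v))"
proof (rule convex_onI)
  fix t :: real and x y :: "real^'n"
  assume "0 < t" "t < 1"
  then have "0 \<le> t * (1 - t) * ((x - y) \<bullet> (P *v (x - y)))"
    using psd by simp
  with quadratic_form_convex_comb[of t x P y]
  show "((1 - t) *\<^sub>R x + t *\<^sub>R y) \<bullet> (P *v ((1 - t) *\<^sub>R x + t *\<^sub>R y))
      \<le> (1 - t) * (x \<bullet> (P *v x)) + t * (y \<bullet> (P *v y))"
    by linarith
qed simp

lemma convex_on_integral:
  fixes f :: "'a::real_vector \<Rightarrow> 'w \<Rightarrow> real"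
  assumes int: "\<And>x. x \<in> S \<Longrightarrow> integrable M (f x)"
    and cvx: "\<And>\<omega>. convex_on S (\<lambda>x. f x \<omega>)" and "convex S"
  shows "convex_on S (\<lambda>x. \<integral>\<omega>. f x \<omega> \<partial>M)"
proof (rule convex_onI)
  fix t :: real and x y
  assume t: "0 < t" "t < 1" and xy: "x \<in> S" "y \<in> S"
  have "(\<integral>\<omega>. f ((1 - t) *\<^sub>R x + t *\<^sub>R y) \<omega> \<partial>M)
      \<le> (\<integral>\<omega>. (1 - t) * f x \<omega> + t * f y \<omega> \<partial>M)"
    using t xy \<open>convex S\<close> int by (intro integral_mono) (auto intro!: convex_onD[OF cvx] simp: convex_alt)
  also have "\<dots> = (1 - t) * (\<integral>\<omega>. f x \<omega> \<partial>M) + t * (\<integral>\<omega>. f y \<omega> \<partial>M)"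
    using int xy by simp
  finally show "(\<integral>\<omega>. f ((1 - t) *\<^sub>R x + t *\<^sub>R y) \<omega> \<partial>M)
      \<le> (1 - t) * (\<integral>\<omega>. f x \<omega> \<partial>M) + t * (\<integral>\<omega>. f y \<omega> \<partial>M)" .
qed fact

lemma concave_on_shifted_margin:
  fixes P :: "real^'n^'n"
  assumes "\<And>v. v \<bullet> (P *v v) \<ge> 0"
  shows "concave_on UNIV (\<lambda>\<theta>. - ((u + P *v \<theta>) \<bullet> \<theta>))"
proof -
  have "concave_on UNIV (\<lambda>\<theta>. (- u) \<bullet> \<theta>)"
    by (simp only: concave_on_inner_right convex_UNIV)
  then have "concave_on UNIV (\<lambda>\<theta>. (- u) \<bullet> \<theta> - \<theta> \<bullet> (P *v \<theta>))"
    using convex_on_quadratic_form[OF assms] by (rule concave_on_diff)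
  moreover have "(- u) \<bullet> \<theta> - \<theta> \<bullet> (P *v \<theta>) = - ((u + P *v \<theta>) \<bullet> \<theta>)" for \<theta>
    by (simp add: inner_add_left inner_commute[of \<theta>])
  ultimately show ?thesis
    by simp
qed

theorem theorem2:
  fixes M :: "'w measure" and \<rho> :: real
    and U0 U1 :: "'w \<Rightarrow> real^'d" and Pi_mat :: "real^'d^'d" and \<Phi> :: "real \<Rightarrow> real"
  assumes "prob_space M"
    and "\<rho> \<in> {0..1}"
    and "U0 \<in> borel_measurable M" and "U1 \<in> borel_measurable M"
    and "\<And>v. v \<bullet> (Pi_mat *v v) \<ge> 0"
    and "convex_on UNIV \<Phi>" and "antimono \<Phi>"
    and "\<And>\<theta>. integrable M (\<lambda>\<omega>. \<Phi> (U1 \<omega> \<bullet> \<theta>))"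
    and "\<And>\<theta>. integrable M (\<lambda>\<omega>. \<Phi> (- ((U0 \<omega> + Pi_mat *v \<theta>) \<bullet> \<theta>)))"
  shows "convex_on UNIV (perf_risk M \<rho> U0 U1 Pi_mat \<Phi>)"
proof -
  have "convex_on UNIV (\<lambda>\<theta>. \<Phi> (U1 \<omega> \<bullet> \<theta>))" for \<omega>
    using assms(6,7) by (rule convex_on_antimono_comp_concave) (simp_all add: concave_on_inner_right)
  then have class1: "convex_on UNIV (\<lambda>\<theta>. \<integral>\<omega>. \<Phi> (U1 \<omega> \<bullet> \<theta>) \<partial>M)"
    using assms(8) by (intro convex_on_integral) simp_all
  have "convex_on UNIV (\<lambda>\<theta>. \<Phi> (- ((U0 \<omega> + Pi_mat *v \<theta>) \<bullet> \<theta>)))" for \<omega>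
    using assms(6,7) concave_on_shifted_margin[OF assms(5)] by (rule convex_on_antimono_comp_concave) simp
  then have class0: "convex_on UNIV (\<lambda>\<theta>. \<integral>\<omega>. \<Phi> (- ((U0 \<omega> + Pi_mat *v \<theta>) \<bullet> \<theta>)) \<partial>M)"
    using assms(9) by (intro convex_on_integral) simp_all
  have "0 \<le> \<rho>" "0 \<le> 1 - \<rho>" using assms(2) by auto
  with class0 class1 show ?thesis
    unfolding perf_risk_def[abs_def] by (intro convex_on_add convex_on_cmul)
qed

end
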